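(* For an ordered forest $\mathcal F$ on $[n]$, let $f_{\mathcal F}:[n]\to[n]$ send each non-root vertex to its parent and each root to itself. Then $f_{\mathcal F\mathcal G}=f_{\mathcal F}\bullet f_{\mathcal G}$, the ideals of $f_{\mathcal F}$ are exactly the vertex sets $L_V$ of the subforests $\mathrm{Lea}_V\mathcal F$ for admissible cuts $V$, and the linear map $\mathbf H_o\to\mathbf{EFSym}$, $\mathcal F\mapsto\mathbf S^{f_{\mathcal F}}$, is an injective morphism of graded Hopf algebras. Its image is the span of the $\mathbf S^\phi$ with $\phi$ acyclic (i.e. having no cycle of length $\ge2$), which is therefore a Hopf subalgebra of $\mathbf{EFSym}$ isomorphic to $\mathbf H_o$.
   Context: An ordered forest on $n$ vertices is a rooted forest with vertex set $[n]$ (labels arbitrary), given by roots and parent map. Admissible cuts are antichains $V$ for the descendant relation; $L_V$ is the set of vertices in $V$ or descending from $V$; $\mathrm{Lea}_V\mathcal F$ and $\mathrm{Roo}_V\mathcal F$ are the induced subforests on $L_V$ and on its complement, relabelled increasingly. $\mathbf H_o$ has basis the ordered forests, product $\mathcal F\mathcal G$ = disjoint union with labels of $\mathcal G$ shifted, coproduct $\Delta\mathcal F=\sum_V\mathrm{Roo}_V\mathcal F\otimes\mathrm{Lea}_V\mathcal F$. $\mathbf{EFSym}$: over $A=\{a_{ij}:i\ne j\}$ with $a_{ij}\prec a_{kl}$ iff $j=k$, $\mathbf S^f$ ($f:[n]\to[n]$) is the sum of words $w_1\cdots w_n$ with $w_{f(j)}\prec w_j$ whenever $f(j)\ne j$;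 product $\mathbf S^f\mathbf S^g=\mathbf S^{f\bullet g}$ (shifted concatenation $i\mapsto f(i)$, $n+i\mapsto g(i)+n$); coproduct $\Delta\mathbf S^f=\sum_{I\models f}\mathbf S^{\mathrm{std}(f^{[n]\setminus I})}\otimes\mathbf S^{\mathrm{std}(f^I)}$, where $I\models f$ means $f^{-1}(I)\subseteq I$, $f^I(x)=f(x)$ if $f(x)\in I$ else $x$, and $\mathrm{std}$ conjugates by the increasing bijection onto $[|I|]$. *)

theory Defs
  imports Main "HOL-Library.Poly_Mapping"
begin

text \<open>An ordered forest on [n] is given by a partial parent map p: p v = None iff v is a
  root; p is None outside [n]; parents lie in [n]; the parent relation is acyclic.\<close>

definition parent_rel :: "(nat \<Rightarrow> nat option) \<Rightarrow> (nat \<times> nat) set" where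
  "parent_rel p = {(v, u). p v = Some u}"

definition is_oforest :: "nat \<Rightarrow> (nat \<Rightarrow> nat option) \<Rightarrow> bool" where
  "is_oforest n p \<longleftrightarrow>
     (\<forall>v. v \<notin> {1..n} \<longrightarrow> p v = None) \<and>
     (\<forall>v u. p v = Some u \<longrightarrow> u \<in> {1..n}) \<and>
     acyclic (parent_rel p)"

typedef oforest = "{(n, p). is_oforest n p}"
  by (rule exI[of _ "(0, \<lambda>_. None)"]) (auto simp: is_oforest_def parent_rel_def acyclic_def)

definition fsize :: "oforest \<Rightarrow> nat" where "fsize F = fst (Rep_oforest F)"
definition fpar :: "oforest \<Rightarrow> nat \<Rightarrow> nat option" where "fpar F = snd (Rep_oforest F)"

definition forest_prod :: "oforest \<Rightarrow> oforest \<Rightarrow> oforest" where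
  "forest_prod F G = Abs_oforest (fsize F + fsize G,
     (\<lambda>v. if v \<le> fsize F then fpar F v
          else map_option (\<lambda>u. u + fsize F) (fpar G (v - fsize F))))"

definition forest_one :: oforest where "forest_one = Abs_oforest (0, \<lambda>_. None)"

definition desc_eq :: "oforest \<Rightarrow> nat \<Rightarrow> nat \<Rightarrow> bool" where
  "desc_eq F u v \<longleftrightarrow> (u, v) \<in> (parent_rel (fpar F))\<^sup>*"

definition admissible_cut :: "oforest \<Rightarrow> nat set \<Rightarrow> bool" where
  "admissible_cut F V \<longleftrightarrow> V \<subseteq> {1..fsize F} \<and>
     (\<forall>u\<in>V. \<forall>v\<in>V. desc_eq F u v \<longrightarrow> u = v)"

definition cutL :: "oforest \<Rightarrow> nat set \<Rightarrow> nat set" where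
  "cutL F V = {u \<in> {1..fsize F}. \<exists>v\<in>V. desc_eq F u v}"

text \<open>Increasing bijection S \<rightarrow> [|S|] (for finite S \<subseteq> nat) and its inverse.\<close>
definition rk :: "nat set \<Rightarrow> nat \<Rightarrow> nat" where
  "rk S x = card {y \<in> S. y < x} + 1"

definition unrk :: "nat set \<Rightarrow> nat \<Rightarrow> nat" where
  "unrk S i = inv_into S (rk S) i"

definition induced :: "oforest \<Rightarrow> nat set \<Rightarrow> oforest" where
  "induced F S = Abs_oforest (card S,
     (\<lambda>i. if i \<in> {1..card S} then
            (case fpar F (unrk S i) of
               None \<Rightarrow> None
             | Some u \<Rightarrow> if u \<in> S then Some (rk S u) else None)
          else None))"

definition Lea :: "oforest \<Rightarrow> nat set \<Rightarrow> oforest" where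
  "Lea F V = induced F (cutL F V)"

definition Roo :: "oforest \<Rightarrow> nat set \<Rightarrow> oforest" where
  "Roo F V = induced F ({1..fsize F} - cutL F V)"

section \<open>Maps f : [n] \<rightarrow> [n] (basis of EFSym), normalised to the identity outside [n]\<close>

definition is_endo :: "nat \<Rightarrow> (nat \<Rightarrow> nat) \<Rightarrow> bool" where
  "is_endo n f \<longleftrightarrow> (\<forall>x\<in>{1..n}. f x \<in> {1..n}) \<and> (\<forall>x. x \<notin> {1..n} \<longrightarrow> f x = x)"

typedef endo = "{(n, f). is_endo n f}"
  by (rule exI[of _ "(0, id)"]) (auto simp: is_endo_def)

definition esize :: "endo \<Rightarrow> nat" where "esize f = fst (Rep_endo f)"
definition emap :: "endo \<Rightarrow> nat \<Rightarrow> nat" where "emap f = snd (Rep_endo f)"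

definition endo_prod :: "endo \<Rightarrow> endo \<Rightarrow> endo" where
  "endo_prod f g = Abs_endo (esize f + esize g,
     (\<lambda>x. if x \<le> esize f then emap f x
          else if x \<le> esize f + esize g then emap g (x - esize f) + esize f else x))"

definition endo_one :: endo where "endo_one = Abs_endo (0, id)"

definition ideal_of :: "endo \<Rightarrow> nat set \<Rightarrow> bool" where
  "ideal_of f I \<longleftrightarrow> I \<subseteq> {1..esize f} \<and> {x \<in> {1..esize f}. emap f x \<in> I} \<subseteq> I"

text \<open>std(f^I): f^I x = f x if f x \<in> I else x, on I, conjugated to [|I|].\<close>
definition restr_std :: "endo \<Rightarrow> nat set \<Rightarrow> endo" where
  "restr_std f I = Abs_endo (card I,
     (\<lambda>i. if i \<in> {1..card I} then
            (let x = unrk I i in rk I (if emap f x \<in> I then emap f x else x))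
          else i))"

definition has_long_cycle :: "endo \<Rightarrow> bool" where
  "has_long_cycle f \<longleftrightarrow> (\<exists>k\<ge>2. \<exists>x\<in>{1..esize f}. (emap f ^^ k) x = x \<and>
      (\<forall>i<k. \<forall>j<k. i \<noteq> j \<longrightarrow> (emap f ^^ i) x \<noteq> (emap f ^^ j) x))"

definition acyclic_endo :: "endo \<Rightarrow> bool" where
  "acyclic_endo f \<longleftrightarrow> \<not> has_long_cycle f"

definition f_of :: "oforest \<Rightarrow> endo" where
  "f_of F = Abs_endo (fsize F, (\<lambda>v. case fpar F v of None \<Rightarrow> v | Some u \<Rightarrow> u))"

section \<open>Free modules, products, coproducts (linear extensions of the basis formulas)\<close>

definition lin_ext :: "('a \<Rightarrow> 'b) \<Rightarrow> ('a \<Rightarrow>\<^sub>0 'k::comm_ring_1) \<Rightarrow> ('b \<Rightarrow>\<^sub>0 'k)" where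
  "lin_ext \<phi> x = (\<Sum>a\<in>Poly_Mapping.keys x. Poly_Mapping.single (\<phi> a) (Poly_Mapping.lookup x a))"

definition bilin_ext :: "('a \<Rightarrow> 'a \<Rightarrow> 'a) \<Rightarrow> ('a \<Rightarrow>\<^sub>0 'k::comm_ring_1) \<Rightarrow> ('a \<Rightarrow>\<^sub>0 'k) \<Rightarrow> ('a \<Rightarrow>\<^sub>0 'k)" where
  "bilin_ext \<mu> x y = (\<Sum>a\<in>Poly_Mapping.keys x. \<Sum>b\<in>Poly_Mapping.keys y. Poly_Mapping.single (\<mu> a b) (Poly_Mapping.lookup x a * Poly_Mapping.lookup y b))"

definition colin_ext :: "('a \<Rightarrow> ('a \<times> 'a) \<Rightarrow>\<^sub>0 'k) \<Rightarrow> ('a \<Rightarrow>\<^sub>0 'k::comm_ring_1) \<Rightarrow> (('a \<times> 'a) \<Rightarrow>\<^sub>0 'k)" where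
  "colin_ext \<Delta> x = (\<Sum>a\<in>Poly_Mapping.keys x. Poly_Mapping.map (\<lambda>c. Poly_Mapping.lookup x a * c) (\<Delta> a))"

definition tensor_map :: "('a \<Rightarrow> 'b) \<Rightarrow> (('a \<times> 'a) \<Rightarrow>\<^sub>0 'k::comm_ring_1) \<Rightarrow> (('b \<times> 'b) \<Rightarrow>\<^sub>0 'k)" where
  "tensor_map \<phi> = lin_ext (\<lambda>(a, b). (\<phi> a, \<phi> b))"

definition Ho_mult :: "(oforest \<Rightarrow>\<^sub>0 'k::comm_ring_1) \<Rightarrow> (oforest \<Rightarrow>\<^sub>0 'k) \<Rightarrow> (oforest \<Rightarrow>\<^sub>0 'k)" where
  "Ho_mult = bilin_ext forest_prod"

definition Ho_unit :: "(oforest \<Rightarrow>\<^sub>0 'k::comm_ring_1)" where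
  "Ho_unit = Poly_Mapping.single forest_one 1"

definition Ho_coprod_basis :: "oforest \<Rightarrow> ((oforest \<times> oforest) \<Rightarrow>\<^sub>0 'k::comm_ring_1)" where
  "Ho_coprod_basis F = (\<Sum>V\<in>{V. admissible_cut F V}. Poly_Mapping.single (Roo F V, Lea F V) 1)"

definition Ho_coprod :: "(oforest \<Rightarrow>\<^sub>0 'k::comm_ring_1) \<Rightarrow> ((oforest \<times> oforest) \<Rightarrow>\<^sub>0 'k)" where
  "Ho_coprod = colin_ext Ho_coprod_basis"

definition Ho_counit :: "(oforest \<Rightarrow>\<^sub>0 'k::comm_ring_1) \<Rightarrow> 'k" where
  "Ho_counit x = (\<Sum>F\<in>Poly_Mapping.keys x. if fsize F = 0 then Poly_Mapping.lookup x F else 0)"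

text \<open>EFSym (basis S^f, f an endo): product, unit, coproduct, counit.\<close>
definition EF_mult :: "(endo \<Rightarrow>\<^sub>0 'k::comm_ring_1) \<Rightarrow> (endo \<Rightarrow>\<^sub>0 'k) \<Rightarrow> (endo \<Rightarrow>\<^sub>0 'k)" where
  "EF_mult = bilin_ext endo_prod"

definition EF_unit :: "(endo \<Rightarrow>\<^sub>0 'k::comm_ring_1)" where
  "EF_unit = Poly_Mapping.single endo_one 1"

definition EF_coprod_basis :: "endo \<Rightarrow> ((endo \<times> endo) \<Rightarrow>\<^sub>0 'k::comm_ring_1)" where
  "EF_coprod_basis f = (\<Sum>I\<in>{I. ideal_of f I}.
      Poly_Mapping.single (restr_std f ({1..esize f} - I), restr_std f I) 1)"

definition EF_coprod :: "(endo \<Rightarrow>\<^sub>0 'k::comm_ring_1) \<Rightarrow> ((endo \<times> endo) \<Rightarrow>\<^sub>0 'k)" where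
  "EF_coprod = colin_ext EF_coprod_basis"

definition EF_counit :: "(endo \<Rightarrow>\<^sub>0 'k::comm_ring_1) \<Rightarrow> 'k" where
  "EF_counit x = (\<Sum>f\<in>Poly_Mapping.keys x. if esize f = 0 then Poly_Mapping.lookup x f else 0)"

definition Phi :: "(oforest \<Rightarrow>\<^sub>0 'k::comm_ring_1) \<Rightarrow> (endo \<Rightarrow>\<^sub>0 'k)" where
  "Phi = lin_ext f_of"

definition acyc_span :: "(endo \<Rightarrow>\<^sub>0 'k::comm_ring_1) set" where
  "acyc_span = {x. Poly_Mapping.keys x \<subseteq> {\<phi>. acyclic_endo \<phi>}}"

end

theory Submission
  imports Defs "HOL-Combinatorics.Orbits"
begin

(* The map F \<mapsto> f_F (non-root vertex \<mapsto> parent, root \<mapsto> itself) is injective on ordered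
   forests, and its image consists exactly of the maps on [n] without cycles of length \<ge> 2:
   a long cycle of f_F would be a cycle of the parent relation, and conversely an acyclic map
   defines a parent relation whose cycles would be periodic orbits of the map.  Under f_F the
   shifted disjoint union of forests becomes the shifted concatenation of maps, relabelled induced
   subforests become standardised restrictions, and the ideals of f_F (sets closed under taking
   preimages) are exactly the sets L_V of admissible cuts, the inverse being V = "tops of I". *)

section \<open>Relabelling the basis of a free module along an injective map\<close>

text \<open>For an injective map \<open>\<phi>\<close> of bases, \<open>lin_ext \<phi>\<close> just renames the keys of a finitely
  supported coefficient function.\<close>

lemma lookup_lin_ext:
  assumes "inj \<phi>"
  shows "Poly_Mapping.lookup (lin_ext \<phi> x) c =
           (if c \<in> range \<phi> then Poly_Mapping.lookup x (inv \<phi> c) else 0)"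
proof -
  have lookup_sum: "Poly_Mapping.lookup (lin_ext \<phi> x) c =
      (\<Sum>a\<in>Poly_Mapping.keys x. if \<phi> a = c then Poly_Mapping.lookup x a else 0)"
    unfolding lin_ext_def lookup_sum lookup_single when_def by (rule refl)
  show ?thesis
  proof (cases "c \<in> range \<phi>")
    case True
    then obtain a0 where c: "c = \<phi> a0" by auto
    have "(\<Sum>a\<in>Poly_Mapping.keys x. if \<phi> a = c then Poly_Mapping.lookup x a else 0)
        = (\<Sum>a\<in>Poly_Mapping.keys x. if a = a0 then Poly_Mapping.lookup x a else 0)"
      using assms c by (intro sum.cong) (auto dest: injD)
    also have "\<dots> = Poly_Mapping.lookup x a0" by (simp add: in_keys_iff)
    finally show ?thesis using lookup_sum c assms by simp
  next
    case False
    then show ?thesis using lookup_sum by (auto intro!: sum.neutral)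
  qed
qed

lemma lookup_lin_ext_image:
  "inj \<phi> \<Longrightarrow> Poly_Mapping.lookup (lin_ext \<phi> x) (\<phi> a) = Poly_Mapping.lookup x a"
  by (simp add: lookup_lin_ext)

lemma keys_lin_ext:
  assumes "inj \<phi>"
  shows "Poly_Mapping.keys (lin_ext \<phi> x) = \<phi> ` Poly_Mapping.keys x"
proof (rule set_eqI)
  fix c
  show "c \<in> Poly_Mapping.keys (lin_ext \<phi> x) \<longleftrightarrow> c \<in> \<phi> ` Poly_Mapping.keys x"
  proof (cases "c \<in> range \<phi>")
    case True
    then obtain b where "c = \<phi> b" by auto
    then show ?thesis using assms by (auto simp: in_keys_iff lookup_lin_ext_image inj_eq)
  next
    case False
    then show ?thesis using assms by (auto simp: in_keys_iff lookup_lin_ext)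
  qed
qed

lemma lin_ext_sum:
  "inj \<phi> \<Longrightarrow> lin_ext \<phi> (sum g A) = (\<Sum>a\<in>A. lin_ext \<phi> (g a))"
  by (rule poly_mapping_eqI) (simp add: lookup_lin_ext lookup_sum)

lemma lin_ext_single:
  "inj \<phi> \<Longrightarrow> lin_ext \<phi> (Poly_Mapping.single a k) = Poly_Mapping.single (\<phi> a) k"
  by (rule poly_mapping_eqI)
     (auto simp: lookup_lin_ext lookup_single when_def inj_eq image_iff dest: sym)

lemma lin_ext_scale:
  "inj \<phi> \<Longrightarrow> lin_ext \<phi> (Poly_Mapping.map (\<lambda>c. s * c) z) =
                Poly_Mapping.map (\<lambda>c. s * c) (lin_ext \<phi> z)"
  by (rule poly_mapping_eqI) (simp add: lookup_lin_ext map.rep_eq when_def)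

lemma inj_lin_ext: "inj \<phi> \<Longrightarrow> inj (lin_ext \<phi>)"
  by (rule injI, rule poly_mapping_eqI) (metis lookup_lin_ext_image)

(* Sums over the support of a relabelled vector can be computed before relabelling;
   this turns linear extensions of basis formulas (coproduct, counit) into each other. *)
lemma sum_keys_lin_ext:
  assumes "inj \<phi>"
  shows "(\<Sum>c\<in>Poly_Mapping.keys (lin_ext \<phi> x). h c (Poly_Mapping.lookup (lin_ext \<phi> x) c))
       = (\<Sum>a\<in>Poly_Mapping.keys x. h (\<phi> a) (Poly_Mapping.lookup x a))"
  unfolding keys_lin_ext[OF assms]
  by (simp add: sum.reindex[OF inj_on_subset[OF assms subset_UNIV]] lookup_lin_ext_image[OF assms])

lemma lin_ext_bilin_ext:
  assumes "inj \<phi>" and hom: "\<And>a b. \<phi> (\<mu> a b) = \<nu> (\<phi> a) (\<phi> b)"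
  shows "lin_ext \<phi> (bilin_ext \<mu> x y) = bilin_ext \<nu> (lin_ext \<phi> x) (lin_ext \<phi> y)"
proof -
  have "bilin_ext \<nu> (lin_ext \<phi> x) (lin_ext \<phi> y) =
     (\<Sum>a\<in>Poly_Mapping.keys x. \<Sum>b\<in>Poly_Mapping.keys y.
        Poly_Mapping.single (\<nu> (\<phi> a) (\<phi> b)) (Poly_Mapping.lookup x a * Poly_Mapping.lookup y b))"
    unfolding bilin_ext_def keys_lin_ext[OF assms(1)]
    by (simp add: sum.reindex[OF inj_on_subset[OF assms(1) subset_UNIV]] lookup_lin_ext_image[OF assms(1)])
  moreover have "lin_ext \<phi> (bilin_ext \<mu> x y) =
     (\<Sum>a\<in>Poly_Mapping.keys x. \<Sum>b\<in>Poly_Mapping.keys y.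
        Poly_Mapping.single (\<phi> (\<mu> a b)) (Poly_Mapping.lookup x a * Poly_Mapping.lookup y b))"
    unfolding bilin_ext_def using assms(1) by (simp add: lin_ext_sum lin_ext_single)
  ultimately show ?thesis using hom by simp
qed

lemma range_lin_ext:
  assumes "inj \<phi>"
  shows "range (lin_ext \<phi> :: ('a \<Rightarrow>\<^sub>0 'k::comm_ring_1) \<Rightarrow> _) = {z. Poly_Mapping.keys z \<subseteq> range \<phi>}"
proof (intro set_eqI iffI)
  fix z assume "z \<in> range (lin_ext \<phi>)"
  then obtain x where "z = lin_ext \<phi> x" by blast
  then show "z \<in> {z. Poly_Mapping.keys z \<subseteq> range \<phi>}" by (simp add: keys_lin_ext[OF assms] image_mono)
next
  fix z :: "'b \<Rightarrow>\<^sub>0 'k" assume "z \<in> {z. Poly_Mapping.keys z \<subseteq> range \<phi>}"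
  then have keys: "Poly_Mapping.keys z \<subseteq> range \<phi>" by simp
  have "lin_ext \<phi> (\<Sum>c\<in>Poly_Mapping.keys z. Poly_Mapping.single (inv \<phi> c) (Poly_Mapping.lookup z c))
      = (\<Sum>c\<in>Poly_Mapping.keys z. Poly_Mapping.single c (Poly_Mapping.lookup z c))"
    using assms keys by (auto simp: lin_ext_sum lin_ext_single f_inv_into_f intro!: sum.cong)
  also have "\<dots> = z"
    by (rule poly_mapping_eqI) (simp add: lookup_sum lookup_single when_def in_keys_iff)
  finally show "z \<in> range (lin_ext \<phi>)" by (rule range_eqI[OF sym])
qed

lemma oforest_wf: "is_oforest (fsize F) (fpar F)"
  using Rep_oforest[of F] by (auto simp: fsize_def fpar_def)

lemma oforest_Abs:
  "is_oforest n p \<Longrightarrow> fsize (Abs_oforest (n, p)) = n \<and> fpar (Abs_oforest (n, p)) = p"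
  by (simp add: fsize_def fpar_def Abs_oforest_inverse)

lemma oforest_eqI: "fsize F = fsize G \<Longrightarrow> fpar F = fpar G \<Longrightarrow> F = G"
  by (metis Rep_oforest_inverse fpar_def fsize_def prod.collapse)

lemma endo_wf: "is_endo (esize f) (emap f)"
  using Rep_endo[of f] by (auto simp: esize_def emap_def)

lemma endo_Abs: "is_endo n e \<Longrightarrow> esize (Abs_endo (n, e)) = n \<and> emap (Abs_endo (n, e)) = e"
  by (simp add: esize_def emap_def Abs_endo_inverse)

lemma endo_eta: "Abs_endo (esize f, emap f) = f"
  by (simp add: esize_def emap_def Rep_endo_inverse)

(* The parent map lives on [n] and is acyclic, hence its parent relation is finite and well-founded
   in both directions; well-foundedness upwards (towards the roots) is what excludes cycles of f_F
   and drives the induction in the ideal/cut correspondence. *)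
lemma fpar_outside: "v \<notin> {1..fsize F} \<Longrightarrow> fpar F v = None"
  using oforest_wf[of F] unfolding is_oforest_def by blast

lemma fpar_inside: "fpar F v = Some u \<Longrightarrow> u \<in> {1..fsize F} \<and> v \<in> {1..fsize F}"
  using oforest_wf[of F] unfolding is_oforest_def by (metis option.distinct(1))

lemma parent_rel_acyclic: "acyclic (parent_rel (fpar F))"
  using oforest_wf[of F] unfolding is_oforest_def by blast

lemma parent_rel_finite: "finite (parent_rel (fpar F))"
proof (rule finite_subset)
  show "parent_rel (fpar F) \<subseteq> {1..fsize F} \<times> {1..fsize F}"
    by (auto simp: parent_rel_def dest: fpar_inside)
qed simp

lemma parent_rel_wf: "wf (parent_rel (fpar F))"
  and parent_rel_wf_converse: "wf ((parent_rel (fpar F))\<inverse>)"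
  using finite_acyclic_wf finite_acyclic_wf_converse parent_rel_finite parent_rel_acyclic by blast+

lemma fpar_not_self: "fpar F v \<noteq> Some v"
  using wf_not_refl[OF parent_rel_wf[of F], of v] by (simp add: parent_rel_def)

lemma rk_strict_mono: "finite S \<Longrightarrow> x \<in> S \<Longrightarrow> y \<in> S \<Longrightarrow> x < y \<Longrightarrow> rk S x < rk S y"
  unfolding rk_def by (intro add_strict_right_mono psubset_card_mono) auto

lemma rk_bij: "finite S \<Longrightarrow> bij_betw (rk S) S {1..card S}"
proof -
  assume f: "finite S"
  have inj: "inj_on (rk S) S"
    by (rule inj_onI, metis f less_irrefl linorder_neqE_nat rk_strict_mono)
  have "card {y \<in> S. y < x} < card S" if "x \<in> S" for x
    using f that by (intro psubset_card_mono) auto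
  then have "rk S ` S \<subseteq> {1..card S}" by (auto simp: rk_def Suc_le_eq)
  moreover have "card (rk S ` S) = card {1..card S}" using card_image[OF inj] by simp
  ultimately have "rk S ` S = {1..card S}" by (intro card_subset_eq) auto
  with inj show ?thesis by (simp add: bij_betw_def)
qed

lemma rk_inside: "finite S \<Longrightarrow> x \<in> S \<Longrightarrow> rk S x \<in> {1..card S}"
  by (metis rk_bij bij_betw_apply)

lemma unrk_inside: "finite S \<Longrightarrow> i \<in> {1..card S} \<Longrightarrow> unrk S i \<in> S"
  unfolding unrk_def by (metis rk_bij bij_betw_def inv_into_into)

lemma rk_unrk: "finite S \<Longrightarrow> i \<in> {1..card S} \<Longrightarrow> rk S (unrk S i) = i"
  unfolding unrk_def by (metis rk_bij bij_betw_def f_inv_into_f)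

lemma unrk_rk: "finite S \<Longrightarrow> x \<in> S \<Longrightarrow> unrk S (rk S x) = x"
  unfolding unrk_def by (metis rk_bij bij_betw_def inv_into_f_f)

section \<open>The map \<open>F \<mapsto> f_F\<close>\<close>

definition fmap :: "oforest \<Rightarrow> nat \<Rightarrow> nat" where
  "fmap F v = (case fpar F v of None \<Rightarrow> v | Some u \<Rightarrow> u)"

lemma fmap_is_endo: "is_endo (fsize F) (fmap F)"
  unfolding is_endo_def fmap_def
  by (auto split: option.split dest: fpar_inside simp: fpar_outside)

lemma esize_f_of [simp]: "esize (f_of F) = fsize F"
  and emap_f_of [simp]: "emap (f_of F) = fmap F"
  using endo_Abs[OF fmap_is_endo[of F]] by (simp_all add: f_of_def fmap_def[abs_def])

lemma f_of_eq: "f_of F = Abs_endo (fsize F, fmap F)"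
  by (simp add: f_of_def fmap_def[abs_def])

lemma fmap_moves: "fmap F v \<noteq> v \<longleftrightarrow> fpar F v = Some (fmap F v)"
  using fpar_not_self[of F v] by (auto simp: fmap_def split: option.splits)

(* A forest is recovered from f_F, since no vertex is its own parent. *)
lemma inj_f_of: "inj f_of"
proof (rule injI)
  fix F G assume eq: "f_of F = f_of G"
  then have size: "fsize F = fsize G" and map: "fmap F = fmap G"
    by (metis esize_f_of, metis emap_f_of)
  have "fpar F v = fpar G v" for v
    using fun_cong[OF map, of v] fpar_not_self[of F v] fpar_not_self[of G v]
    by (cases "fpar F v"; cases "fpar G v") (auto simp: fmap_def)
  with size show "F = G" by (intro oforest_eqI) auto
qed

(* The shifted disjoint union is again a forest: its parent relation is the union of the relation
   of F and a shifted copy of that of G, and no edge leads from the first part to the second. *)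
lemma forest_prod_wf:
  "is_oforest (fsize F + fsize G) (\<lambda>v. if v \<le> fsize F then fpar F v
          else map_option (\<lambda>u. u + fsize F) (fpar G (v - fsize F)))" (is "is_oforest ?N ?p")
proof -
  let ?n = "fsize F"
  let ?shifted = "inv_image (parent_rel (fpar G)) (\<lambda>a. a - ?n)"
  have sub: "parent_rel ?p \<subseteq> ?shifted \<union> parent_rel (fpar F)"
    by (auto simp: parent_rel_def split: if_splits)
  have "Domain ?shifted \<subseteq> {?n<..}"
  proof
    fix x assume "x \<in> Domain ?shifted"
    then obtain b where "fpar G (x - ?n) = Some b" by (auto simp: parent_rel_def)
    then show "x \<in> {?n<..}" using fpar_inside by fastforce
  qed
  moreover have "Range (parent_rel (fpar F)) \<subseteq> {..?n}"
    by (auto simp: parent_rel_def dest: fpar_inside)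
  ultimately have "Domain ?shifted \<inter> Range (parent_rel (fpar F)) = {}" by fastforce
  then have "wf (?shifted \<union> parent_rel (fpar F))"
    by (intro wf_Un wf_inv_image parent_rel_wf)
  then have acyc: "acyclic (parent_rel ?p)"
    using sub wf_subset wf_acyclic by blast
  have "?p v = None" if "v \<notin> {1..?N}" for v
  proof (cases "v \<le> ?n")
    case False
    with that have "v - ?n \<notin> {1..fsize G}" by auto
    with False show ?thesis by (simp add: fpar_outside)
  qed (use that in \<open>simp add: fpar_outside\<close>)
  moreover have "u \<in> {1..?N}" if "?p v = Some u" for v u
  proof (cases "v \<le> ?n")
    case True
    with that show ?thesis using fpar_inside[of F v u] by simp
  next
    case False
    with that obtain w where "fpar G (v - ?n) = Some w" "u = w + ?n" by auto
    then show ?thesis using fpar_inside[of G "v - ?n" w] by simp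
  qed
  ultimately show ?thesis using acyc unfolding is_oforest_def by blast
qed

lemma fsize_forest_prod: "fsize (forest_prod F G) = fsize F + fsize G"
  and fpar_forest_prod: "fpar (forest_prod F G) = (\<lambda>v. if v \<le> fsize F then fpar F v
          else map_option (\<lambda>u. u + fsize F) (fpar G (v - fsize F)))"
  using oforest_Abs[OF forest_prod_wf[of F G]] by (simp_all add: forest_prod_def)

lemma f_of_prod: "f_of (forest_prod F G) = endo_prod (f_of F) (f_of G)"
proof -
  have "fmap (forest_prod F G) = (\<lambda>x. if x \<le> fsize F then fmap F x
          else if x \<le> fsize F + fsize G then fmap G (x - fsize F) + fsize F else x)"
  proof
    fix x show "fmap (forest_prod F G) x = (if x \<le> fsize F then fmap F x
          else if x \<le> fsize F + fsize G then fmap G (x - fsize F) + fsize F else x)"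
    proof (cases "x \<le> fsize F + fsize G")
      case False
      then have "fpar G (x - fsize F) = None" by (intro fpar_outside) auto
      with False show ?thesis by (simp add: fmap_def fpar_forest_prod)
    qed (auto simp: fmap_def fpar_forest_prod split: option.split)
  qed
  then show ?thesis
    unfolding f_of_eq[of "forest_prod F G"] endo_prod_def fsize_forest_prod esize_f_of emap_f_of
    by simp
qed

lemma f_of_one: "f_of forest_one = endo_one"
proof -
  have "is_oforest 0 (\<lambda>_. None)"
    by (auto simp: is_oforest_def parent_rel_def acyclic_def)
  then have "fsize forest_one = 0" "fpar forest_one = (\<lambda>_. None)"
    using oforest_Abs by (simp_all add: forest_one_def)
  then show ?thesis
    by (simp add: f_of_def endo_one_def id_def)
qed

definition induced_par :: "oforest \<Rightarrow> nat set \<Rightarrow> nat \<Rightarrow> nat option" where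
  "induced_par F S i = (if i \<in> {1..card S} then
            (case fpar F (unrk S i) of
               None \<Rightarrow> None
             | Some u \<Rightarrow> if u \<in> S then Some (rk S u) else None)
          else None)"

(* Induced subforests are forests: every parent edge is, after relabelling, a parent edge of F. *)
lemma induced_wf:
  assumes fin: "finite S"
  shows "is_oforest (card S) (induced_par F S)"
proof -
  have "parent_rel (induced_par F S) \<subseteq> inv_image (parent_rel (fpar F)) (unrk S)"
    by (auto simp: induced_par_def parent_rel_def unrk_rk[OF fin] split: if_splits option.splits)
  then have "acyclic (parent_rel (induced_par F S))"
    using wf_subset[OF wf_inv_image[OF parent_rel_wf]] wf_acyclic by blast
  moreover have "u \<in> {1..card S}" if "induced_par F S v = Some u" for v u
    using that rk_inside[OF fin] by (auto simp: induced_par_def split: if_splits option.splits)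
  moreover have "induced_par F S v = None" if "v \<notin> {1..card S}" for v
    using that by (simp add: induced_par_def del: atLeastAtMost_iff)
  ultimately show ?thesis unfolding is_oforest_def by blast
qed

lemma f_of_induced:
  assumes fin: "finite S"
  shows "f_of (induced F S) = restr_std (f_of F) S"
proof -
  have size: "fsize (induced F S) = card S" and par: "fpar (induced F S) = induced_par F S"
    using oforest_Abs[OF induced_wf[OF fin, of F]]
    by (simp_all add: induced_def induced_par_def[abs_def])
  have "fmap (induced F S) = (\<lambda>i. if i \<in> {1..card S} then
            (let x = unrk S i in rk S (if fmap F x \<in> S then fmap F x else x)) else i)"
  proof
    fix i
    show "fmap (induced F S) i = (if i \<in> {1..card S} then
            (let x = unrk S i in rk S (if fmap F x \<in> S then fmap F x else x)) else i)"
    proof (cases "i \<in> {1..card S}")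
      case True
      then have "rk S (unrk S i) = i" by (rule rk_unrk[OF fin])
      with True unrk_inside[OF fin True] show ?thesis
        by (cases "fpar F (unrk S i)") (auto simp: fmap_def par induced_par_def Let_def)
    qed (simp add: fmap_def par induced_par_def del: atLeastAtMost_iff)
  qed
  then show ?thesis
    unfolding f_of_eq[of "induced F S"] restr_std_def size emap_f_of by simp
qed

section \<open>The maps \<open>f_F\<close> are exactly the acyclic maps\<close>

text \<open>A long cycle of \<open>\<phi>\<close> is the same as a non-fixed point lying on its own orbit; the
  library notion of orbit and its period \<open>funpow_dist1\<close> provide the distinct iterates.\<close>

lemma periodic_point_long_cycle:
  assumes moves: "f x \<noteq> x" and periodic: "x \<in> orbit f x"
  shows "\<exists>m\<ge>2. (f ^^ m) x = x \<and> (\<forall>i<m. \<forall>j<m. i \<noteq> j \<longrightarrow> (f ^^ i) x \<noteq> (f ^^ j) x)"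
proof (intro exI conjI allI impI)
  let ?m = "funpow_dist1 f x x"
  show period: "(f ^^ ?m) x = x" using funpow_dist1_prop[OF periodic] .
  show "?m \<ge> 2"
  proof (rule ccontr)
    assume "\<not> ?m \<ge> 2"
    then have "?m = 1" by simp
    with period moves show False by simp
  qed
  show "(f ^^ i) x \<noteq> (f ^^ j) x" if "i < ?m" "j < ?m" "i \<noteq> j" for i j
    using funpow_neq_less_funpow_dist1[OF periodic that] .
qed

lemma has_long_cycle_iff:
  "has_long_cycle \<phi> \<longleftrightarrow>
     (\<exists>x\<in>{1..esize \<phi>}. emap \<phi> x \<noteq> x \<and> x \<in> orbit (emap \<phi>) x)"
proof
  assume "has_long_cycle \<phi>"
  then obtain k x where k: "k \<ge> 2" and x: "x \<in> {1..esize \<phi>}" and cyc: "(emap \<phi> ^^ k) x = x"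
    and dist: "\<forall>i<k. \<forall>j<k. i \<noteq> j \<longrightarrow> (emap \<phi> ^^ i) x \<noteq> (emap \<phi> ^^ j) x"
    unfolding has_long_cycle_def by (elim exE bexE conjE) (rule that)
  obtain k' where k': "k = Suc k'" using k by (cases k) auto
  have "(emap \<phi> ^^ k') (emap \<phi> x) \<in> orbit (emap \<phi>) x"
    by (intro funpow_in_orbit orbit.base)
  moreover have "(emap \<phi> ^^ k') (emap \<phi> x) = x"
    using cyc unfolding k' by (simp only: funpow.simps comp_apply funpow_swap1)
  ultimately have "x \<in> orbit (emap \<phi>) x" by (simp only:)
  moreover have "emap \<phi> x \<noteq> x" using dist[rule_format, of 1 0] k by simp
  ultimately show "\<exists>x\<in>{1..esize \<phi>}. emap \<phi> x \<noteq> x \<and> x \<in> orbit (emap \<phi>) x" using x by blast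
next
  assume "\<exists>x\<in>{1..esize \<phi>}. emap \<phi> x \<noteq> x \<and> x \<in> orbit (emap \<phi>) x"
  then obtain x where x: "x \<in> {1..esize \<phi>}"
    and moves: "emap \<phi> x \<noteq> x" and periodic: "x \<in> orbit (emap \<phi>) x"
    by blast
  obtain m where "m \<ge> 2" "(emap \<phi> ^^ m) x = x"
    "\<forall>i<m. \<forall>j<m. i \<noteq> j \<longrightarrow> (emap \<phi> ^^ i) x \<noteq> (emap \<phi> ^^ j) x"
    using periodic_point_long_cycle[OF moves periodic] by blast
  with x show "has_long_cycle \<phi>" unfolding has_long_cycle_def by blast
qed

lemma periodic_orbit_no_fixpoint:
  assumes moves: "f x \<noteq> x" and periodic: "x \<in> orbit f x"
  shows "f ((f ^^ i) x) \<noteq> (f ^^ i) x"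
proof
  let ?y = "(f ^^ i) x"
  assume fixed: "f ?y = ?y"
  have "?y \<in> orbit f x" using periodic by (rule funpow_in_orbit)
  then have "x \<in> orbit f ?y" by (rule orbit_swap[OF periodic])
  moreover have "orbit f ?y = {?y}" using fixed by (simp add: orbit_eq_singleton_iff)
  ultimately have "x = ?y" by simp
  with fixed moves show False by metis
qed

(* f_F is acyclic: along a long cycle every step is a parent edge, giving an infinite upward chain. *)
lemma f_of_acyclic: "acyclic_endo (f_of F)"
  unfolding acyclic_endo_def has_long_cycle_iff
proof
  assume "\<exists>x\<in>{1..esize (f_of F)}. emap (f_of F) x \<noteq> x \<and> x \<in> orbit (emap (f_of F)) x"
  then obtain x where moves: "fmap F x \<noteq> x" and periodic: "x \<in> orbit (fmap F) x" by auto
  have "fpar F ((fmap F ^^ i) x) = Some ((fmap F ^^ Suc i) x)" for i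
    using fmap_moves[THEN iffD1, OF periodic_orbit_no_fixpoint[OF moves periodic]] by simp
  then have chain: "((fmap F ^^ i) x, (fmap F ^^ Suc i) x) \<in> parent_rel (fpar F)" for i
    by (simp add: parent_rel_def)
  obtain k where "((fmap F ^^ Suc k) x, (fmap F ^^ k) x) \<notin> (parent_rel (fpar F))\<inverse>"
    using wf_no_infinite_down_chainE[OF parent_rel_wf_converse] .
  with chain[of k] show False by simp
qed

lemma trancl_graph_in_orbit:
  assumes graph: "\<And>a b. (a, b) \<in> r \<Longrightarrow> b = f a"
  shows "(a, b) \<in> r\<^sup>+ \<Longrightarrow> b \<in> orbit f a"
proof (induction rule: trancl_induct)
  case (base b)
  show ?case unfolding graph[OF base] by (rule orbit.base)
next
  case (step b c)
  show ?case unfolding graph[OF step(2)] using step.IH by (rule orbit.step)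
qed

definition forest_of_endo :: "nat \<Rightarrow> (nat \<Rightarrow> nat) \<Rightarrow> nat \<Rightarrow> nat option" where
  "forest_of_endo n e v = (if v \<in> {1..n} \<and> e v \<noteq> v then Some (e v) else None)"

(* For an acyclic map this is a forest: a cycle of parents would be a periodic orbit. *)
lemma forest_of_endo_wf:
  assumes "acyclic_endo \<phi>"
  shows "is_oforest (esize \<phi>) (forest_of_endo (esize \<phi>) (emap \<phi>))"
proof -
  let ?n = "esize \<phi>" and ?e = "emap \<phi>"
  let ?r = "parent_rel (forest_of_endo ?n ?e)"
  have edge: "(a, b) \<in> ?r \<longleftrightarrow> a \<in> {1..?n} \<and> ?e a \<noteq> a \<and> b = ?e a" for a b
    by (auto simp: parent_rel_def forest_of_endo_def)
  have "acyclic ?r"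
  proof (rule acyclicI, intro allI notI)
    fix x assume cycle: "(x, x) \<in> ?r\<^sup>+"
    then obtain y where "(x, y) \<in> ?r" by (blast dest: tranclD)
    then have x: "x \<in> {1..?n}" and moves: "?e x \<noteq> x" by (simp_all add: edge)
    have "x \<in> orbit ?e x" using trancl_graph_in_orbit[OF _ cycle] edge by blast
    with x moves have "has_long_cycle \<phi>" unfolding has_long_cycle_iff by blast
    with assms show False by (simp add: acyclic_endo_def)
  qed
  moreover have "forest_of_endo ?n ?e v = None" if "v \<notin> {1..?n}" for v
    using that by (simp add: forest_of_endo_def del: atLeastAtMost_iff)
  moreover have "u \<in> {1..?n}" if "forest_of_endo ?n ?e v = Some u" for v u
    using that endo_wf[of \<phi>] by (auto simp: is_endo_def forest_of_endo_def split: if_splits)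
  ultimately show ?thesis unfolding is_oforest_def by blast
qed

lemma acyclic_endo_in_range:
  assumes "acyclic_endo \<phi>"
  shows "\<phi> \<in> range f_of"
proof
  let ?F = "Abs_oforest (esize \<phi>, forest_of_endo (esize \<phi>) (emap \<phi>))"
  have size: "fsize ?F = esize \<phi>" and par: "fpar ?F = forest_of_endo (esize \<phi>) (emap \<phi>)"
    using oforest_Abs[OF forest_of_endo_wf[OF assms]] by simp_all
  have "fmap ?F = emap \<phi>"
  proof
    fix v show "fmap ?F v = emap \<phi> v"
      using endo_wf[of \<phi>] unfolding is_endo_def
      by (cases "v \<in> {1..esize \<phi>}") (simp_all add: fmap_def par forest_of_endo_def del: atLeastAtMost_iff)
  qed
  then show "\<phi> = f_of ?F" by (simp add: f_of_eq size endo_eta)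
qed simp

lemma acyclic_endo_iff_range: "acyclic_endo \<phi> \<longleftrightarrow> \<phi> \<in> range f_of"
  using acyclic_endo_in_range f_of_acyclic by blast

section \<open>Ideals of \<open>f_F\<close> are the vertex sets of admissible cuts\<close>

lemma ideal_of_f_of_iff:
  "ideal_of (f_of F) I \<longleftrightarrow>
     I \<subseteq> {1..fsize F} \<and> (\<forall>x u. fpar F x = Some u \<longrightarrow> u \<in> I \<longrightarrow> x \<in> I)"
proof
  assume ideal: "ideal_of (f_of F) I"
  have "x \<in> I" if "fpar F x = Some u" "u \<in> I" for x u
  proof -
    have "x \<in> {1..fsize F}" using fpar_inside[OF that(1)] by simp
    moreover have "fmap F x = u" using that(1) by (simp add: fmap_def)
    ultimately show "x \<in> I" using ideal that(2) by (auto simp: ideal_of_def)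
  qed
  with ideal show "I \<subseteq> {1..fsize F} \<and> (\<forall>x u. fpar F x = Some u \<longrightarrow> u \<in> I \<longrightarrow> x \<in> I)"
    by (simp add: ideal_of_def)
next
  assume closed: "I \<subseteq> {1..fsize F} \<and> (\<forall>x u. fpar F x = Some u \<longrightarrow> u \<in> I \<longrightarrow> x \<in> I)"
  have "x \<in> I" if "fmap F x \<in> I" for x
    using closed that by (cases "fpar F x") (auto simp: fmap_def)
  with closed show "ideal_of (f_of F) I" by (auto simp: ideal_of_def)
qed

lemma ideal_desc_closed:
  assumes ideal: "ideal_of (f_of F) I" and desc: "desc_eq F u v" and v: "v \<in> I"
  shows "u \<in> I"
  using desc[unfolded desc_eq_def] v
proof (induction rule: converse_rtrancl_induct)
  case (step y z)
  then show ?case using ideal by (auto simp: ideal_of_f_of_iff parent_rel_def)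
qed

(* Every L_V is an ideal. *)
lemma cutL_ideal: "ideal_of (f_of F) (cutL F V)"
  unfolding ideal_of_f_of_iff cutL_def desc_eq_def
  by (auto dest: fpar_inside intro: converse_rtrancl_into_rtrancl simp: parent_rel_def)

definition tops :: "oforest \<Rightarrow> nat set \<Rightarrow> nat set" where
  "tops F S = {v \<in> S. \<forall>u. fpar F v = Some u \<longrightarrow> u \<notin> S}"

lemma tops_admissible:
  assumes ideal: "ideal_of (f_of F) I"
  shows "admissible_cut F (tops F I)"
  unfolding admissible_cut_def
proof (intro conjI ballI impI)
  show "tops F I \<subseteq> {1..fsize F}" using ideal by (auto simp: tops_def ideal_of_f_of_iff)
next
  fix u v assume u: "u \<in> tops F I" and v: "v \<in> tops F I" and desc: "desc_eq F u v"
  show "u = v"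
  proof (rule ccontr)
    assume "u \<noteq> v"
    then have "(u, v) \<in> (parent_rel (fpar F))\<^sup>+"
      using desc by (simp add: desc_eq_def rtrancl_eq_or_trancl)
    then obtain w where uw: "(u, w) \<in> parent_rel (fpar F)" and wv: "desc_eq F w v"
      by (auto dest: tranclD simp: desc_eq_def)
    have "w \<in> I" using ideal_desc_closed[OF ideal wv] v by (simp add: tops_def)
    then show False using u uw by (auto simp: tops_def parent_rel_def)
  qed
qed

(* \<dots> which regenerates the ideal; the proof climbs to a top by well-founded induction upwards. *)
lemma cutL_tops:
  assumes ideal: "ideal_of (f_of F) I"
  shows "cutL F (tops F I) = I"
proof -
  have "x \<in> I \<longrightarrow> (\<exists>v\<in>tops F I. desc_eq F x v)" for x
  proof (induction x rule: wf_induct[OF parent_rel_wf_converse[of F]])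
    case (1 x)
    show ?case
    proof
      assume xI: "x \<in> I"
      show "\<exists>v\<in>tops F I. desc_eq F x v"
      proof (cases "x \<in> tops F I")
        case True
        then show ?thesis by (auto simp: desc_eq_def)
      next
        case False
        then obtain u where xu: "fpar F x = Some u" and uI: "u \<in> I" using xI by (auto simp: tops_def)
        then have "(x, u) \<in> parent_rel (fpar F)" by (simp add: parent_rel_def)
        moreover obtain v where "v \<in> tops F I" "desc_eq F u v"
          using 1 uI calculation by blast
        ultimately show ?thesis
          by (auto simp: desc_eq_def intro: converse_rtrancl_into_rtrancl)
      qed
    qed
  qed
  moreover have "I \<subseteq> {1..fsize F}" using ideal by (simp add: ideal_of_f_of_iff)
  ultimately show ?thesis
    using ideal_desc_closed[OF ideal] unfolding cutL_def tops_def by blast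
qed

lemma tops_cutL:
  assumes adm: "admissible_cut F V"
  shows "tops F (cutL F V) = V"
proof (intro set_eqI iffI)
  fix x assume x: "x \<in> tops F (cutL F V)"
  then obtain w where w: "w \<in> V" "desc_eq F x w" by (auto simp: tops_def cutL_def)
  show "x \<in> V"
  proof (cases "x = w")
    case False
    then have "(x, w) \<in> (parent_rel (fpar F))\<^sup>+"
      using w by (simp add: desc_eq_def rtrancl_eq_or_trancl)
    then obtain y where xy: "fpar F x = Some y" and yw: "desc_eq F y w"
      by (auto dest: tranclD simp: desc_eq_def parent_rel_def)
    have "y \<in> cutL F V" using fpar_inside[OF xy] w yw by (auto simp: cutL_def)
    then show ?thesis using x xy by (simp add: tops_def)
  qed (use w in simp)
next
  fix v assume v: "v \<in> V"
  then have "v \<in> cutL F V" using adm by (auto simp: cutL_def desc_eq_def admissible_cut_def)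
  moreover have "u \<notin> cutL F V" if vu: "fpar F v = Some u" for u
  proof
    assume "u \<in> cutL F V"
    then obtain w where w: "w \<in> V" "desc_eq F u w" by (auto simp: cutL_def)
    have "(v, u) \<in> parent_rel (fpar F)" using vu by (simp add: parent_rel_def)
    then have vw: "(v, w) \<in> (parent_rel (fpar F))\<^sup>+" using w by (simp add: desc_eq_def rtrancl_into_trancl2)
    then have "v = w" using adm v w(1) by (simp add: admissible_cut_def desc_eq_def trancl_into_rtrancl)
    then show False using vw parent_rel_acyclic[of F] by (simp add: acyclic_def)
  qed
  ultimately show "v \<in> tops F (cutL F V)" by (simp add: tops_def)
qed

lemma cutL_bij_ideals: "bij_betw (cutL F) {V. admissible_cut F V} {I. ideal_of (f_of F) I}"
proof (rule bij_betw_byWitness[where f' = "tops F"])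
  show "\<forall>V\<in>{V. admissible_cut F V}. tops F (cutL F V) = V" by (simp add: tops_cutL)
  show "\<forall>I\<in>{I. ideal_of (f_of F) I}. cutL F (tops F I) = I" by (simp add: cutL_tops)
  show "cutL F ` {V. admissible_cut F V} \<subseteq> {I. ideal_of (f_of F) I}" by (auto simp: cutL_ideal)
  show "tops F ` {I. ideal_of (f_of F) I} \<subseteq> {V. admissible_cut F V}" by (auto simp: tops_admissible)
qed

lemma ideals_are_cuts: "{I. ideal_of (f_of F) I} = {cutL F V | V. admissible_cut F V}"
  using bij_betw_imp_surj_on[OF cutL_bij_ideals[of F]] by blast

section \<open>\<open>F \<mapsto> S^{f_F}\<close> is an injective morphism of Hopf algebras onto the acyclic span\<close>

lemma inj_f_of_pair: "inj (\<lambda>(a, b). (f_of a, f_of b))"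
  by (rule injI) (auto dest: injD[OF inj_f_of])

lemma finite_cutL: "finite (cutL F V)"
  by (rule finite_subset[of _ "{1..fsize F}"]) (auto simp: cutL_def)

(* On a basis forest, the coproduct of H_o is carried to that of EFSym: reindex the sum over cuts
   by the bijection with ideals. *)
lemma f_of_coprod_basis:
  "tensor_map f_of (Ho_coprod_basis F :: (oforest \<times> oforest) \<Rightarrow>\<^sub>0 'k::comm_ring_1)
     = EF_coprod_basis (f_of F)"
proof -
  let ?term = "\<lambda>I. Poly_Mapping.single
      (restr_std (f_of F) ({1..fsize F} - I), restr_std (f_of F) I) (1::'k)"
  have "tensor_map f_of (Ho_coprod_basis F :: (oforest \<times> oforest) \<Rightarrow>\<^sub>0 'k)
      = (\<Sum>V\<in>{V. admissible_cut F V}. Poly_Mapping.single (f_of (Roo F V), f_of (Lea F V)) 1)"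
    unfolding tensor_map_def Ho_coprod_basis_def
    by (simp add: lin_ext_sum[OF inj_f_of_pair] lin_ext_single[OF inj_f_of_pair])
  also have "\<dots> = (\<Sum>V\<in>{V. admissible_cut F V}. ?term (cutL F V))"
    by (intro sum.cong refl) (simp add: Roo_def Lea_def f_of_induced finite_cutL)
  also have "\<dots> = (\<Sum>I\<in>{I. ideal_of (f_of F) I}. ?term I)"
    by (rule sum.reindex_bij_betw[OF cutL_bij_ideals])
  also have "\<dots> = EF_coprod_basis (f_of F)"
    by (simp add: EF_coprod_basis_def)
  finally show ?thesis .
qed

lemma Phi_inj: "inj Phi"
  unfolding Phi_def by (rule inj_lin_ext[OF inj_f_of])

lemma Phi_mult: "Phi (Ho_mult x y) = EF_mult (Phi x) (Phi y)"
  unfolding Phi_def Ho_mult_def EF_mult_def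
  by (rule lin_ext_bilin_ext[where \<mu> = forest_prod and \<nu> = endo_prod, OF inj_f_of f_of_prod])

lemma Phi_unit: "Phi Ho_unit = EF_unit"
  unfolding Phi_def Ho_unit_def EF_unit_def by (simp add: lin_ext_single[OF inj_f_of] f_of_one)

lemma Phi_coprod: "EF_coprod (Phi x) = tensor_map f_of (Ho_coprod x)"
proof -
  have "EF_coprod (Phi x) = (\<Sum>a\<in>Poly_Mapping.keys x.
          Poly_Mapping.map (\<lambda>c. Poly_Mapping.lookup x a * c) (EF_coprod_basis (f_of a)))"
    unfolding EF_coprod_def colin_ext_def Phi_def
    by (rule sum_keys_lin_ext[OF inj_f_of,
          where h = "\<lambda>c v. Poly_Mapping.map (\<lambda>t. v * t) (EF_coprod_basis c)"])
  also have "\<dots> = tensor_map f_of (Ho_coprod x)"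
    unfolding Ho_coprod_def colin_ext_def tensor_map_def
    by (simp add: lin_ext_sum[OF inj_f_of_pair] lin_ext_scale[OF inj_f_of_pair]
        f_of_coprod_basis[unfolded tensor_map_def])
  finally show ?thesis .
qed

lemma Phi_counit: "EF_counit (Phi x) = Ho_counit x"
proof -
  have "EF_counit (Phi x) = (\<Sum>a\<in>Poly_Mapping.keys x.
          if esize (f_of a) = 0 then Poly_Mapping.lookup x a else 0)"
    unfolding EF_counit_def Phi_def
    by (rule sum_keys_lin_ext[OF inj_f_of, where h = "\<lambda>c v. if esize c = 0 then v else 0"])
  then show ?thesis by (simp add: Ho_counit_def)
qed

lemma Phi_range: "range Phi = acyc_span"
  unfolding Phi_def acyc_span_def range_lin_ext[OF inj_f_of] acyclic_endo_iff_range by simp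

(* Being the image of a Hopf morphism, the acyclic span is closed under product and coproduct. *)
lemma acyc_span_mult:
  assumes "x \<in> acyc_span" and "y \<in> acyc_span"
  shows "EF_mult x y \<in> acyc_span"
proof -
  obtain a b where "x = Phi a" and "y = Phi b" using assms unfolding Phi_range[symmetric] by blast
  then have "EF_mult x y = Phi (Ho_mult a b)" by (simp add: Phi_mult)
  then show ?thesis unfolding Phi_range[symmetric] by simp
qed

lemma acyc_span_coprod:
  assumes "x \<in> acyc_span"
  shows "Poly_Mapping.keys (EF_coprod x) \<subseteq> {\<phi>. acyclic_endo \<phi>} \<times> {\<phi>. acyclic_endo \<phi>}"
proof -
  obtain a where x: "x = Phi a" using assms unfolding Phi_range[symmetric] by blast
  have "Poly_Mapping.keys (EF_coprod x) = (\<lambda>(F, G). (f_of F, f_of G)) ` Poly_Mapping.keys (Ho_coprod a)"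
    unfolding x Phi_coprod tensor_map_def keys_lin_ext[OF inj_f_of_pair] ..
  then show ?thesis using f_of_acyclic by auto
qed

theorem mainTheorem13:
  shows
    "(\<forall>F G. f_of (forest_prod F G) = endo_prod (f_of F) (f_of G))
   \<and> (\<forall>F. {I. ideal_of (f_of F) I} = {cutL F V | V. admissible_cut F V})
   \<and> (\<forall>F. esize (f_of F) = fsize F)
   \<and> inj (Phi :: (oforest \<Rightarrow>\<^sub>0 'k::field) \<Rightarrow> _)
   \<and> (\<forall>x y :: oforest \<Rightarrow>\<^sub>0 'k. Phi (Ho_mult x y) = EF_mult (Phi x) (Phi y))
   \<and> Phi (Ho_unit :: oforest \<Rightarrow>\<^sub>0 'k) = EF_unit
   \<and> (\<forall>x :: oforest \<Rightarrow>\<^sub>0 'k. EF_coprod (Phi x) = tensor_map f_of (Ho_coprod x))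
   \<and> (\<forall>x :: oforest \<Rightarrow>\<^sub>0 'k. EF_counit (Phi x) = Ho_counit x)
   \<and> range (Phi :: (oforest \<Rightarrow>\<^sub>0 'k) \<Rightarrow> _) = acyc_span
   \<and> (EF_unit :: endo \<Rightarrow>\<^sub>0 'k) \<in> acyc_span
   \<and> (\<forall>x\<in>(acyc_span :: (endo \<Rightarrow>\<^sub>0 'k) set). \<forall>y\<in>acyc_span. EF_mult x y \<in> acyc_span)
   \<and> (\<forall>x\<in>(acyc_span :: (endo \<Rightarrow>\<^sub>0 'k) set).
        Poly_Mapping.keys (EF_coprod x) \<subseteq> {\<phi>. acyclic_endo \<phi>} \<times> {\<phi>. acyclic_endo \<phi>})
   \<and> bij_betw (Phi :: (oforest \<Rightarrow>\<^sub>0 'k) \<Rightarrow> _) UNIV acyc_span"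
proof -
  have "bij_betw (Phi :: (oforest \<Rightarrow>\<^sub>0 'k) \<Rightarrow> _) UNIV acyc_span"
    using Phi_inj Phi_range by (simp add: bij_betw_def)
  moreover have "(EF_unit :: endo \<Rightarrow>\<^sub>0 'k) \<in> acyc_span"
    unfolding Phi_range[symmetric] Phi_unit[symmetric] by (rule rangeI)
  ultimately show ?thesis
    by (intro conjI allI ballI)
       (simp_all add: f_of_prod ideals_are_cuts Phi_inj Phi_mult Phi_unit Phi_coprod Phi_counit
         Phi_range acyc_span_mult acyc_span_coprod)
qed

end
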